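(* Let $(G,c)$ be a W-state graph, and let $X$ and $X'$ be the vertex sets of the two connected components of the spanning subgraph $G_m=(V(G),E_m(G))$ of monochromatic edges. If $\min(|X|,|X'|)\ge 3$, then $G$ is bicritical.
   Context: Graphs may have parallel edges but no loops. A half-edge $2$-colouring $c$ of $G$ assigns to each pair $(e,w)$ with $w$ an endpoint of edge $e$ a colour in $\{0,1\}$ (0 = blue, 1 = red). An edge $e=uv$ is bichromatic if $c(e,u)\neq c(e,v)$ and monochromatic otherwise; $E_m(G)$ is the set of monochromatic edges; standing convention: monochromatic edges are blue at both ends. A graph is matching-covered if every edge lies in some perfect matching. A W-state graph is a half-edge $2$-coloured matching-covered graph $(G,c)$ in which every perfect matching contains exactly one bichromatic edge, and every vertex $v$ is incident with an edge $e$ with $c(e,v)=1$. For any W-state graph, $G_m$ has exactly two connected components. A graph $G$ with $|V(G)|\ge 4$ is bicritical if $G-\{u,v\}$ has a perfect matching for all distinct $u,v\in V(G)$. *)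

theory Defs
  imports Main
begin

text \<open>A finite multigraph without loops: vertex set V, edge set E (edges are abstract
  objects of type 'e, so parallel edges are allowed), and an endpoint map ends
  assigning to each edge a set of exactly two distinct vertices of V.\<close>
definition multigraph :: "'v set \<Rightarrow> 'e set \<Rightarrow> ('e \<Rightarrow> 'v set) \<Rightarrow> bool" where
  "multigraph V E ends \<longleftrightarrow> finite V \<and> finite E \<and>
     (\<forall>e\<in>E. ends e \<subseteq> V \<and> card (ends e) = 2)"

definition perfect_matching :: "'v set \<Rightarrow> 'e set \<Rightarrow> ('e \<Rightarrow> 'v set) \<Rightarrow> 'e set \<Rightarrow> bool" where
  "perfect_matching V E ends M \<longleftrightarrow> M \<subseteq> E \<and>
     (\<forall>v\<in>V. \<exists>!e. e \<in> M \<and> v \<in> ends e)"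

definition matching_covered :: "'v set \<Rightarrow> 'e set \<Rightarrow> ('e \<Rightarrow> 'v set) \<Rightarrow> bool" where
  "matching_covered V E ends \<longleftrightarrow>
     (\<forall>e\<in>E. \<exists>M. perfect_matching V E ends M \<and> e \<in> M)"

text \<open>Half-edge 2-colouring: c e w \<in> {0,1} for every edge e and endpoint w of e
  (0 = blue, 1 = red).\<close>
definition half_edge_colouring :: "'e set \<Rightarrow> ('e \<Rightarrow> 'v set) \<Rightarrow> ('e \<Rightarrow> 'v \<Rightarrow> nat) \<Rightarrow> bool" where
  "half_edge_colouring E ends c \<longleftrightarrow> (\<forall>e\<in>E. \<forall>w\<in>ends e. c e w \<in> {0, 1})"

definition bichromatic :: "('e \<Rightarrow> 'v set) \<Rightarrow> ('e \<Rightarrow> 'v \<Rightarrow> nat) \<Rightarrow> 'e \<Rightarrow> bool" where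
  "bichromatic ends c e \<longleftrightarrow> (\<exists>u\<in>ends e. \<exists>v\<in>ends e. c e u \<noteq> c e v)"

definition mono_edges :: "'e set \<Rightarrow> ('e \<Rightarrow> 'v set) \<Rightarrow> ('e \<Rightarrow> 'v \<Rightarrow> nat) \<Rightarrow> 'e set" where
  "mono_edges E ends c = {e \<in> E. \<not> bichromatic ends c e}"

definition W_state_graph :: "'v set \<Rightarrow> 'e set \<Rightarrow> ('e \<Rightarrow> 'v set) \<Rightarrow> ('e \<Rightarrow> 'v \<Rightarrow> nat) \<Rightarrow> bool" where
  "W_state_graph V E ends c \<longleftrightarrow>
     multigraph V E ends \<and> half_edge_colouring E ends c \<and> matching_covered V E ends \<and>
     (\<forall>M. perfect_matching V E ends M \<longrightarrow> card {e \<in> M. bichromatic ends c e} = 1) \<and>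
     (\<forall>v\<in>V. \<exists>e\<in>E. v \<in> ends e \<and> c e v = 1)"

definition adj_rel :: "'v set \<Rightarrow> 'e set \<Rightarrow> ('e \<Rightarrow> 'v set) \<Rightarrow> ('v \<times> 'v) set" where
  "adj_rel V F ends = {(u, v). u \<in> V \<and> v \<in> V \<and> (\<exists>e\<in>F. ends e = {u, v})}"

definition components :: "'v set \<Rightarrow> 'e set \<Rightarrow> ('e \<Rightarrow> 'v set) \<Rightarrow> 'v set set" where
  "components V F ends = (\<lambda>v. {w. (v, w) \<in> (adj_rel V F ends)\<^sup>*}) ` V"

definition bicritical :: "'v set \<Rightarrow> 'e set \<Rightarrow> ('e \<Rightarrow> 'v set) \<Rightarrow> bool" where
  "bicritical V E ends \<longleftrightarrow> card V \<ge> 4 \<and>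
     (\<forall>u\<in>V. \<forall>v\<in>V. u \<noteq> v \<longrightarrow>
        (\<exists>M. perfect_matching (V - {u, v}) {e \<in> E. ends e \<inter> {u, v} = {}} ends M))"

end

theory Submission
  imports Defs
begin

text \<open>Write \<open>A\<close>, \<open>B\<close> for the two monochromatic components. By matching-coverage every
  bichromatic edge \<open>f\<close> lies in a perfect matching whose other edges are monochromatic, hence
  stay inside \<open>A\<close> or inside \<open>B\<close>; so \<open>A - ends f\<close> and \<open>B - ends f\<close> have perfect matchings
  by monochromatic edges. A parity argument shows that no bichromatic edge lies inside one
  component, so every vertex \<open>x \<in> A\<close> is the end of a bichromatic edge \<open>xy\<close> with \<open>y \<in> B\<close>,
  and \<open>A - {x}\<close>, \<open>B - {y}\<close> are matchable by monochromatic edges. For \<open>u \<in> A\<close>, \<open>v \<in> B\<close>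
  this matches \<open>G - {u, v}\<close> directly. For \<open>u, v \<in> A\<close>, let \<open>vw\<close> be the edge covering \<open>v\<close>
  in a matching of \<open>A - {u}\<close>; replacing it by a crossing edge \<open>wy\<close> and adding a matching of
  \<open>B - {y}\<close> matches \<open>G - {u, v}\<close>. The size bound only serves to ensure \<open>|V| \<ge> 4\<close>.\<close>

definition induced_perfect_matching ::
    "'v set \<Rightarrow> 'e set \<Rightarrow> ('e \<Rightarrow> 'v set) \<Rightarrow> 'e set \<Rightarrow> bool" where
  "induced_perfect_matching S F ends N \<longleftrightarrow>
     N \<subseteq> F \<and> (\<forall>g\<in>N. ends g \<subseteq> S) \<and> (\<forall>z\<in>S. \<exists>!g. g \<in> N \<and> z \<in> ends g)"

definition edge_closed :: "'e set \<Rightarrow> ('e \<Rightarrow> 'v set) \<Rightarrow> 'v set \<Rightarrow> bool" where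
  "edge_closed F ends A \<longleftrightarrow> (\<forall>e\<in>F. ends e \<inter> A \<noteq> {} \<longrightarrow> ends e \<subseteq> A)"

lemma card_2_eq_doubleton: "card S = 2 \<Longrightarrow> p \<in> S \<Longrightarrow> q \<in> S \<Longrightarrow> p \<noteq> q \<Longrightarrow> S = {p, q}"
  by (auto simp: card_2_iff)

subsection \<open>Perfect matchings of induced subgraphs\<close>

lemma induced_perfect_matchingI:
  assumes "N \<subseteq> F" "\<And>g. g \<in> N \<Longrightarrow> ends g \<subseteq> S" "\<And>z. z \<in> S \<Longrightarrow> \<exists>g\<in>N. z \<in> ends g"
    and "\<And>g g' z. g \<in> N \<Longrightarrow> g' \<in> N \<Longrightarrow> z \<in> ends g \<Longrightarrow> z \<in> ends g' \<Longrightarrow> g = g'"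
  shows "induced_perfect_matching S F ends N"
  using assms unfolding induced_perfect_matching_def by metis

lemma induced_perfect_matchingD:
  assumes "induced_perfect_matching S F ends N"
  shows "N \<subseteq> F" "g \<in> N \<Longrightarrow> ends g \<subseteq> S" "z \<in> S \<Longrightarrow> \<exists>g\<in>N. z \<in> ends g"
    and "g \<in> N \<Longrightarrow> g' \<in> N \<Longrightarrow> z \<in> ends g \<Longrightarrow> z \<in> ends g' \<Longrightarrow> g = g'"
  using assms unfolding induced_perfect_matching_def by (blast, blast, blast, metis subsetD)

lemma induced_perfect_matching_mono:
  "induced_perfect_matching S F ends N \<Longrightarrow> F \<subseteq> F' \<Longrightarrow> induced_perfect_matching S F' ends N"
  unfolding induced_perfect_matching_def by blast

lemma induced_perfect_matching_singleton:
  "f \<in> F \<Longrightarrow> induced_perfect_matching (ends f) F ends {f}"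
  unfolding induced_perfect_matching_def by blast

lemma induced_perfect_matching_Un:
  assumes N: "induced_perfect_matching S F ends N" and N': "induced_perfect_matching T F ends N'"
    and "S \<inter> T = {}"
  shows "induced_perfect_matching (S \<union> T) F ends (N \<union> N')"
proof (rule induced_perfect_matchingI)
  fix g g' z assume "g \<in> N \<union> N'" "g' \<in> N \<union> N'" "z \<in> ends g" "z \<in> ends g'"
  with induced_perfect_matchingD[OF N] induced_perfect_matchingD[OF N'] \<open>S \<inter> T = {}\<close>
  show "g = g'" by blast
qed (use induced_perfect_matchingD[OF N] induced_perfect_matchingD[OF N'] in blast)+

lemma induced_perfect_matching_Diff:
  assumes N: "induced_perfect_matching S F ends N" and "g \<in> N"
  shows "induced_perfect_matching (S - ends g) F ends (N - {g})"
proof (rule induced_perfect_matchingI)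
  fix g' assume "g' \<in> N - {g}"
  with induced_perfect_matchingD[OF N] \<open>g \<in> N\<close> show "ends g' \<subseteq> S - ends g" by blast
next
  fix z assume "z \<in> S - ends g"
  with induced_perfect_matchingD[OF N] show "\<exists>g'\<in>N - {g}. z \<in> ends g'" by blast
qed (use induced_perfect_matchingD[OF N] in blast)+

lemma induced_perfect_matching_imp_perfect_matching:
  assumes "induced_perfect_matching S F ends N" "S \<inter> T = {}"
  shows "perfect_matching S {e \<in> F. ends e \<inter> T = {}} ends N"
  using assms unfolding induced_perfect_matching_def perfect_matching_def by blast

lemma induced_perfect_matching_partner:
  assumes "induced_perfect_matching S F ends N" "\<forall>g\<in>F. card (ends g) = 2" "v \<in> S"
  obtains g w where "g \<in> N" "ends g = {v, w}" "w \<noteq> v" "w \<in> S"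
proof -
  obtain g where g: "g \<in> N" "v \<in> ends g" "ends g \<subseteq> S" "card (ends g) = 2"
    using assms unfolding induced_perfect_matching_def by blast
  then obtain x y where xy: "ends g = {x, y}" "x \<noteq> y"
    using card_2_iff[of "ends g"] by blast
  define w where "w = (if x = v then y else x)"
  have "ends g = {v, w}" "w \<noteq> v"
    using xy g(2) by (auto simp: w_def)
  moreover have "w \<in> S" using g(3) \<open>ends g = {v, w}\<close> by blast
  ultimately show thesis using g(1) that by blast
qed

lemma induced_perfect_matching_even_card:
  assumes "induced_perfect_matching S F ends N" "\<forall>g\<in>F. card (ends g) = 2" "finite S"
  shows "even (card S)"
proof -
  let ?P = "ends ` N"
  have "\<Union>?P = S"
    using assms(1) unfolding induced_perfect_matching_def by blast
  moreover have "\<forall>p\<in>?P. card p = 2"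
    using assms(1,2) unfolding induced_perfect_matching_def by blast
  moreover have "\<forall>p\<in>?P. \<forall>q\<in>?P. p \<noteq> q \<longrightarrow> p \<inter> q = {}"
    using assms(1) unfolding induced_perfect_matching_def by blast
  ultimately have "card S = 2 * card ?P"
    using card_partition[of ?P 2] assms(3) by (metis finite_UnionD)
  then show ?thesis by simp
qed

lemma perfect_matching_restrict_edge_closed:
  assumes M: "perfect_matching V E ends M" and b: "b \<in> M" and F: "M - {b} \<subseteq> F"
    and closed: "edge_closed F ends A" and "A \<subseteq> V"
  shows "induced_perfect_matching (A - ends b) F ends {g \<in> M - {b}. ends g \<subseteq> A}"
proof -
  have avoid_b: "t \<notin> ends b" if "g \<in> M - {b}" "ends g \<subseteq> A" "t \<in> ends g" for g t
  proof
    assume "t \<in> ends b"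
    moreover have "t \<in> V" using that \<open>A \<subseteq> V\<close> by blast
    ultimately have "g = b"
      using M b that(1,3) unfolding perfect_matching_def by blast
    with that(1) show False by blast
  qed
  have "\<exists>!g. g \<in> M - {b} \<and> ends g \<subseteq> A \<and> z \<in> ends g" if z: "z \<in> A - ends b" for z
  proof -
    have "z \<in> V" using z \<open>A \<subseteq> V\<close> by blast
    then obtain g where g: "g \<in> M" "z \<in> ends g" "\<And>g'. g' \<in> M \<Longrightarrow> z \<in> ends g' \<Longrightarrow> g' = g"
      using M unfolding perfect_matching_def by metis
    have "g \<noteq> b" using g(2) z by blast
    then have "ends g \<subseteq> A"
      using closed F g(1,2) z unfolding edge_closed_def by blast
    with g \<open>g \<noteq> b\<close> show ?thesis by blast
  qed
  moreover have "ends g \<subseteq> A - ends b" if "g \<in> M - {b}" "ends g \<subseteq> A" for g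
    using avoid_b that by blast
  ultimately show ?thesis
    using F unfolding induced_perfect_matching_def by auto
qed

subsection \<open>Connected components\<close>

lemma sym_adj_rel: "sym (adj_rel V F ends)"
  unfolding adj_rel_def sym_def by (auto simp: insert_commute)

lemma adj_rel_rtrancl_in_V:
  assumes "(x, w) \<in> (adj_rel V F ends)\<^sup>*" "x \<in> V"
  shows "w \<in> V"
  using assms by (induction rule: rtrancl_induct) (auto simp: adj_rel_def)

lemma Union_components: "\<Union> (components V F ends) = V"
proof
  show "\<Union> (components V F ends) \<subseteq> V"
    unfolding components_def by (auto elim: adj_rel_rtrancl_in_V)
  show "V \<subseteq> \<Union> (components V F ends)"
    unfolding components_def by blast
qed

lemma components_disjoint:
  assumes "K \<in> components V F ends" "K' \<in> components V F ends" "K \<noteq> K'"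
  shows "K \<inter> K' = {}"
proof (rule ccontr)
  let ?R = "(adj_rel V F ends)\<^sup>*"
  assume "K \<inter> K' \<noteq> {}"
  then obtain w where "w \<in> K" "w \<in> K'" by blast
  obtain x x' where K: "K = {w. (x, w) \<in> ?R}" and K': "K' = {w. (x', w) \<in> ?R}"
    using assms(1,2) unfolding components_def by blast
  have "sym ?R"
    using sym_adj_rel by (rule sym_rtrancl)
  with \<open>w \<in> K\<close> \<open>w \<in> K'\<close> have "(x, x') \<in> ?R" "(x', x) \<in> ?R"
    unfolding K K' sym_def by (blast intro: rtrancl_trans)+
  then have "K = K'"
    unfolding K K' by (blast intro: rtrancl_trans)
  with assms(3) show False ..
qed

lemma components_edge_closed:
  assumes edges: "\<forall>e\<in>F. ends e \<subseteq> V \<and> card (ends e) = 2" and K: "K \<in> components V F ends"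
  shows "edge_closed F ends K"
  unfolding edge_closed_def
proof (intro ballI impI subsetI)
  fix e q assume e: "e \<in> F" "ends e \<inter> K \<noteq> {}" and q: "q \<in> ends e"
  then obtain p where p: "p \<in> ends e" "p \<in> K" by blast
  obtain x where K_def: "K = {w. (x, w) \<in> (adj_rel V F ends)\<^sup>*}"
    using K unfolding components_def by blast
  show "q \<in> K"
  proof (cases "p = q")
    case False
    have "card (ends e) = 2" using edges e(1) by blast
    then have "ends e = {p, q}" using p(1) q False by (rule card_2_eq_doubleton)
    moreover have "p \<in> V" "q \<in> V" using edges e(1) p(1) q by blast+
    ultimately have "(p, q) \<in> adj_rel V F ends"
      using e(1) unfolding adj_rel_def by blast
    with p(2) show ?thesis
      unfolding K_def by (blast intro: rtrancl_into_rtrancl)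
  qed (use p in blast)
qed

lemma two_components_split:
  assumes edges: "\<forall>e\<in>F. ends e \<subseteq> V \<and> card (ends e) = 2"
    and comps: "components V F ends = {X, X'}" and "X \<noteq> X'"
  shows "X \<union> X' = V" "X \<inter> X' = {}" "edge_closed F ends X" "edge_closed F ends X'"
  using Union_components[of V F ends] components_disjoint[of X V F ends X']
    components_edge_closed[OF edges] assms(3) comps by auto

subsection \<open>W-state graphs\<close>

locale W_state =
  fixes V :: "'v set" and E :: "'e set" and ends :: "'e \<Rightarrow> 'v set" and c :: "'e \<Rightarrow> 'v \<Rightarrow> nat"
  assumes W_state_graph: "W_state_graph V E ends c"
    and mono_edges_blue: "\<forall>e\<in>mono_edges E ends c. \<forall>w\<in>ends e. c e w = 0"
begin

abbreviation Em :: "'e set" where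
  "Em \<equiv> mono_edges E ends c"

lemma finite_V: "finite V"
  using W_state_graph unfolding W_state_graph_def multigraph_def by blast

lemma ends_subset: "e \<in> E \<Longrightarrow> ends e \<subseteq> V"
  using W_state_graph unfolding W_state_graph_def multigraph_def by blast

lemma card_ends: "e \<in> E \<Longrightarrow> card (ends e) = 2"
  using W_state_graph unfolding W_state_graph_def multigraph_def by blast

lemma Em_subset: "Em \<subseteq> E"
  unfolding mono_edges_def by blast

lemma card_ends_Em: "\<forall>g\<in>Em. card (ends g) = 2"
  using Em_subset card_ends by blast

lemma not_bichromatic_Em: "e \<in> Em \<Longrightarrow> \<not> bichromatic ends c e"
  unfolding mono_edges_def by blast

lemma perfect_matching_bichromatic_edges:
  "perfect_matching V E ends M \<Longrightarrow> card {e \<in> M. bichromatic ends c e} = 1"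
  using W_state_graph unfolding W_state_graph_def by blast

lemma perfect_matching_not_subset_Em:
  assumes "perfect_matching V E ends M"
  shows "\<not> M \<subseteq> Em"
  using perfect_matching_bichromatic_edges[OF assms] not_bichromatic_Em
  by (metis (no_types, lifting) card_1_singletonE mem_Collect_eq singletonI subsetD)

lemma perfect_matching_other_edges_mono:
  assumes M: "perfect_matching V E ends M" and "b \<in> M" "bichromatic ends c b"
  shows "M - {b} \<subseteq> Em"
proof -
  have "{e \<in> M. bichromatic ends c e} = {b}"
    using perfect_matching_bichromatic_edges[OF M] assms(2,3)
    by (metis (no_types, lifting) card_1_singletonE mem_Collect_eq singletonD)
  moreover have "M \<subseteq> E"
    using M unfolding perfect_matching_def by blast
  ultimately show ?thesis
    unfolding mono_edges_def by blast
qed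

text \<open>A red half-edge cannot lie on a monochromatic edge, as those are blue at both ends.\<close>

lemma bichromatic_edge_at:
  assumes "v \<in> V"
  obtains f where "f \<in> E" "v \<in> ends f" "bichromatic ends c f"
proof -
  obtain f where f: "f \<in> E" "v \<in> ends f" "c f v = 1"
    using W_state_graph assms unfolding W_state_graph_def by blast
  then have "f \<notin> Em" using mono_edges_blue by fastforce
  with f that show thesis unfolding mono_edges_def by blast
qed

lemma induced_perfect_matching_Diff_ends_bichromatic:
  assumes "f \<in> E" "bichromatic ends c f" "edge_closed Em ends A" "A \<subseteq> V"
  obtains N where "induced_perfect_matching (A - ends f) Em ends N"
proof -
  obtain M where M: "perfect_matching V E ends M" "f \<in> M"
    using W_state_graph \<open>f \<in> E\<close> unfolding W_state_graph_def matching_covered_def by blast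
  then have "M - {f} \<subseteq> Em"
    using perfect_matching_other_edges_mono assms(2) by blast
  with M assms(3,4) show thesis
    using that[OF perfect_matching_restrict_edge_closed] by blast
qed

end

locale W_state_split = W_state V E ends c
    for V :: "'v set" and E :: "'e set" and ends :: "'e \<Rightarrow> 'v set" and c :: "'e \<Rightarrow> 'v \<Rightarrow> nat" +
  fixes A B :: "'v set"
  assumes split_Un: "A \<union> B = V" and split_disjoint: "A \<inter> B = {}"
    and edge_closed_A: "edge_closed Em ends A" and edge_closed_B: "edge_closed Em ends B"
    and A_nonempty: "A \<noteq> {}" and B_nonempty: "B \<noteq> {}"
begin

lemma W_state_split_swap: "W_state_split V E ends c B A"
  using W_state_axioms split_Un split_disjoint edge_closed_A edge_closed_B A_nonempty B_nonempty
  by (simp add: W_state_split_def W_state_split_axioms_def Un_commute Int_commute)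

lemma split_subset: "A \<subseteq> V" "B \<subseteq> V"
  using split_Un by blast+

lemma finite_B: "finite B"
  using split_subset(2) finite_V by (rule finite_subset)

lemma induced_perfect_matching_other_side:
  assumes "f \<in> E" "bichromatic ends c f" "ends f \<subseteq> A"
  obtains N where "induced_perfect_matching B Em ends N"
proof -
  obtain N where "induced_perfect_matching (B - ends f) Em ends N"
    using induced_perfect_matching_Diff_ends_bichromatic[OF assms(1,2) edge_closed_B split_subset(2)] .
  moreover have "B - ends f = B"
    using assms(3) split_disjoint by blast
  ultimately show thesis
    using that by simp
qed

lemma no_induced_perfect_matchings_both_sides:
  assumes NA: "induced_perfect_matching A Em ends NA" and NB: "induced_perfect_matching B Em ends NB"
  shows False
proof -
  have NANB: "induced_perfect_matching V Em ends (NA \<union> NB)"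
    using induced_perfect_matching_Un[OF NA NB split_disjoint] split_Un by simp
  have "induced_perfect_matching V E ends (NA \<union> NB)"
    using NANB Em_subset by (rule induced_perfect_matching_mono)
  then have "perfect_matching V {e \<in> E. ends e \<inter> {} = {}} ends (NA \<union> NB)"
    by (rule induced_perfect_matching_imp_perfect_matching) simp
  then have "\<not> NA \<union> NB \<subseteq> Em"
    by (intro perfect_matching_not_subset_Em) simp
  with induced_perfect_matchingD(1)[OF NANB] show False by blast
qed

text \<open>A bichromatic edge inside \<open>A\<close> makes \<open>|B|\<close> even, while a bichromatic edge at a vertex
  \<open>y \<in> B\<close> either lies inside \<open>B\<close> (then both sides are monochromatically matchable) or leaves
  \<open>B\<close> (then \<open>B - {y}\<close> is monochromatically matchable, and \<open>|B|\<close> is odd).\<close>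

lemma bichromatic_edge_not_inside:
  assumes f: "f \<in> E" "bichromatic ends c f"
  shows "\<not> ends f \<subseteq> A"
proof
  interpret swapped: W_state_split V E ends c B A
    by (rule W_state_split_swap)
  assume "ends f \<subseteq> A"
  then obtain NB where NB: "induced_perfect_matching B Em ends NB"
    using induced_perfect_matching_other_side f by blast
  then have "even (card B)"
    using induced_perfect_matching_even_card card_ends_Em finite_B by blast
  obtain y where "y \<in> B" using B_nonempty by blast
  then obtain f' where f': "f' \<in> E" "y \<in> ends f'" "bichromatic ends c f'"
    using bichromatic_edge_at split_subset(2) by blast
  show False
  proof (cases "ends f' \<subseteq> B")
    case True
    then obtain NA where "induced_perfect_matching A Em ends NA"
      using swapped.induced_perfect_matching_other_side f'(1,3) by blast
    then show False
      using NB by (rule no_induced_perfect_matchings_both_sides)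
  next
    case False
    then obtain z where "z \<in> ends f'" "z \<notin> B" by blast
    with \<open>y \<in> B\<close> have "ends f' = {y, z}"
      using card_2_eq_doubleton[OF card_ends[OF f'(1)] f'(2)] by blast
    then have "B - ends f' = B - {y}"
      using \<open>z \<notin> B\<close> by blast
    moreover obtain N where "induced_perfect_matching (B - ends f') Em ends N"
      using induced_perfect_matching_Diff_ends_bichromatic[OF f'(1,3) edge_closed_B split_subset(2)] .
    ultimately have "induced_perfect_matching (B - {y}) Em ends N" by simp
    then have "even (card (B - {y}))"
      using induced_perfect_matching_even_card[OF _ card_ends_Em] finite_B by simp
    moreover have "card (B - {y}) = card B - 1" "card B > 0"
      using \<open>y \<in> B\<close> finite_B card_gt_0_iff by auto
    ultimately show False
      using \<open>even (card B)\<close> by presburger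
  qed
qed

lemma crossing_bichromatic_edge:
  assumes "x \<in> A"
  obtains f y NA NB where "f \<in> E" "ends f = {x, y}" "y \<in> B"
    and "induced_perfect_matching (A - {x}) Em ends NA"
    and "induced_perfect_matching (B - {y}) Em ends NB"
proof -
  obtain f where f: "f \<in> E" "x \<in> ends f" "bichromatic ends c f"
    using bichromatic_edge_at split_subset(1) assms by blast
  then obtain y where "y \<in> ends f" "y \<notin> A"
    using bichromatic_edge_not_inside by blast
  have "y \<in> B"
    using \<open>y \<in> ends f\<close> \<open>y \<notin> A\<close> ends_subset[OF f(1)] split_Un by blast
  have "ends f = {x, y}"
    using card_2_eq_doubleton[OF card_ends[OF f(1)] f(2) \<open>y \<in> ends f\<close>] assms \<open>y \<notin> A\<close> by blast
  obtain NA where "induced_perfect_matching (A - ends f) Em ends NA"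
    using induced_perfect_matching_Diff_ends_bichromatic[OF f(1,3) edge_closed_A split_subset(1)] .
  moreover obtain NB where "induced_perfect_matching (B - ends f) Em ends NB"
    using induced_perfect_matching_Diff_ends_bichromatic[OF f(1,3) edge_closed_B split_subset(2)] .
  moreover have "A - ends f = A - {x}" "B - ends f = B - {y}"
    using \<open>y \<notin> A\<close> assms split_disjoint unfolding \<open>ends f = {x, y}\<close> by auto
  ultimately have "induced_perfect_matching (A - {x}) Em ends NA"
    "induced_perfect_matching (B - {y}) Em ends NB"
    by simp_all
  with that f(1) \<open>ends f = {x, y}\<close> \<open>y \<in> B\<close> show thesis by blast
qed

lemma induced_perfect_matching_remove_opposite:
  assumes "u \<in> A" "v \<in> B"
  obtains N where "induced_perfect_matching (V - {u, v}) E ends N"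
proof -
  interpret swapped: W_state_split V E ends c B A
    by (rule W_state_split_swap)
  obtain NA where "induced_perfect_matching (A - {u}) Em ends NA"
    using crossing_bichromatic_edge[OF \<open>u \<in> A\<close>] by metis
  moreover obtain NB where "induced_perfect_matching (B - {v}) Em ends NB"
    using swapped.crossing_bichromatic_edge[OF \<open>v \<in> B\<close>] by metis
  moreover have "(A - {u}) \<union> (B - {v}) = V - {u, v}" "(A - {u}) \<inter> (B - {v}) = {}"
    using split_Un split_disjoint assms by blast+
  ultimately have "induced_perfect_matching (V - {u, v}) Em ends (NA \<union> NB)"
    using induced_perfect_matching_Un by metis
  then show thesis
    using that induced_perfect_matching_mono Em_subset by blast
qed

lemma induced_perfect_matching_remove_same_side:
  assumes "u \<in> A" "v \<in> A" "u \<noteq> v"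
  obtains N where "induced_perfect_matching (V - {u, v}) E ends N"
proof -
  obtain NA where NA: "induced_perfect_matching (A - {u}) Em ends NA"
    using crossing_bichromatic_edge[OF \<open>u \<in> A\<close>] by metis
  have "v \<in> A - {u}" using assms by blast
  then obtain g w where g: "g \<in> NA" "ends g = {v, w}" "w \<noteq> v" "w \<in> A - {u}"
    by (rule induced_perfect_matching_partner[OF NA card_ends_Em])
  then have "w \<in> A" by blast
  then obtain f y NB where f: "f \<in> E" "ends f = {w, y}" "y \<in> B"
    and NB: "induced_perfect_matching (B - {y}) Em ends NB"
    by (rule crossing_bichromatic_edge)
  have "induced_perfect_matching (A - {u} - {v, w}) E ends (NA - {g})"
    using induced_perfect_matching_mono[OF induced_perfect_matching_Diff[OF NA g(1)] Em_subset]
    unfolding g(2) .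
  moreover have "induced_perfect_matching {w, y} E ends {f}"
    using induced_perfect_matching_singleton[OF f(1), of ends] unfolding f(2) .
  ultimately have "induced_perfect_matching (A - {u} - {v, w} \<union> {w, y}) E ends (NA - {g} \<union> {f})"
    by (rule induced_perfect_matching_Un) (use f(3) split_disjoint in blast)
  moreover have "induced_perfect_matching (B - {y}) E ends NB"
    using NB Em_subset by (rule induced_perfect_matching_mono)
  ultimately have "induced_perfect_matching (A - {u} - {v, w} \<union> {w, y} \<union> (B - {y})) E ends
      (NA - {g} \<union> {f} \<union> NB)"
    by (rule induced_perfect_matching_Un) (use g(4) split_disjoint in blast)
  moreover have "A - {u} - {v, w} \<union> {w, y} \<union> (B - {y}) = V - {u, v}"
    using split_Un split_disjoint assms g(3,4) f(3) by auto
  ultimately show thesis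
    using that by simp
qed

lemma induced_perfect_matching_remove_two:
  assumes "u \<in> V" "v \<in> V" "u \<noteq> v"
  obtains N where "induced_perfect_matching (V - {u, v}) E ends N"
proof -
  interpret swapped: W_state_split V E ends c B A
    by (rule W_state_split_swap)
  from assms(1,2) split_Un consider "u \<in> A" "v \<in> A" | "u \<in> A" "v \<in> B" | "u \<in> B" "v \<in> A"
    | "u \<in> B" "v \<in> B"
    by blast
  then show thesis
  proof cases
    case 1
    from 1 assms(3) that show thesis by (rule induced_perfect_matching_remove_same_side)
  next
    case 2
    from 2 that show thesis by (rule induced_perfect_matching_remove_opposite)
  next
    case 3
    from 3 that show thesis by (rule swapped.induced_perfect_matching_remove_opposite)
  next
    case 4
    from 4 assms(3) that show thesis by (rule swapped.induced_perfect_matching_remove_same_side)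
  qed
qed

lemma bicritical_if_card_ge_4:
  assumes "card V \<ge> 4"
  shows "bicritical V E ends"
  unfolding bicritical_def
proof (intro conjI ballI impI assms)
  fix u v assume "u \<in> V" "v \<in> V" "u \<noteq> v"
  then obtain N where "induced_perfect_matching (V - {u, v}) E ends N"
    by (rule induced_perfect_matching_remove_two)
  then show "\<exists>M. perfect_matching (V - {u, v}) {e \<in> E. ends e \<inter> {u, v} = {}} ends M"
    using induced_perfect_matching_imp_perfect_matching by blast
qed

end

theorem mainTheorem11:
  fixes V :: "'v set" and E :: "'e set" and ends :: "'e \<Rightarrow> 'v set"
    and c :: "'e \<Rightarrow> 'v \<Rightarrow> nat" and X X' :: "'v set"
  assumes "W_state_graph V E ends c"
    and "\<forall>e\<in>mono_edges E ends c. \<forall>w\<in>ends e. c e w = 0"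
    and "components V (mono_edges E ends c) ends = {X, X'}"
    and "X \<noteq> X'"
    and "min (card X) (card X') \<ge> 3"
  shows "bicritical V E ends"
proof -
  interpret W_state V E ends c
    using assms(1,2) by unfold_locales
  have "\<forall>e\<in>Em. ends e \<subseteq> V \<and> card (ends e) = 2"
    using Em_subset ends_subset card_ends by blast
  note split = two_components_split[OF this assms(3,4)]
  have "card X \<ge> 3" "card X' \<ge> 3"
    using assms(5) by simp_all
  interpret W_state_split V E ends c X X'
    by unfold_locales (use split \<open>card X \<ge> 3\<close> \<open>card X' \<ge> 3\<close> in auto)
  have "card V = card X + card X'"
    using card_Un_disjoint[OF finite_subset finite_subset] split_subset finite_V split(1,2)
    by metis
  then show ?thesis
    using \<open>card X \<ge> 3\<close> \<open>card X' \<ge> 3\<close> by (intro bicritical_if_card_ge_4) simp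
qed

end
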